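(* Let $a,b$ be integers with $0<b<a$, let $S=\langle a,a+1,\ldots,a+b\rangle$ with conductor $c$, let $m\ge 2c-1$ and let $t\in\{1,\ldots,a+b-1\}$. Then $$\sharp\mathrm D(m,m+1,\ldots,m+t)=\sharp\mathrm D(m)+\sum_{j=1}^{t}\left\lceil\frac{a+b-j}{b}\right\rceil.$$
   Context: The conductor $c$ of a numerical semigroup $S$ is the least element of $S$ with $c+n\in S$ for all $n\in\mathbb N$. For $x\in S$, $\mathrm D(x)=\{\alpha\in S\mid x-\alpha\in S\}$, and $\mathrm D(x_1,\ldots,x_t)=\mathrm D(x_1)\cup\cdots\cup\mathrm D(x_t)$. *)

theory Defs
  imports Complex_Main
begin

inductive_set gen_semigroup :: "nat set \<Rightarrow> nat set" for G :: "nat set" where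
  zero: "0 \<in> gen_semigroup G"
| add: "x \<in> gen_semigroup G \<Longrightarrow> g \<in> G \<Longrightarrow> x + g \<in> gen_semigroup G"

definition conductor :: "nat set \<Rightarrow> nat" where
  "conductor S = (LEAST c. c \<in> S \<and> (\<forall>n. c + n \<in> S))"

text \<open>D(x) = {alpha in S | x - alpha in S} (integer subtraction, so alpha \<le> x).\<close>
definition Dset :: "nat set \<Rightarrow> nat \<Rightarrow> nat set" where
  "Dset S x = {\<alpha> \<in> S. \<alpha> \<le> x \<and> x - \<alpha> \<in> S}"

definition Dmulti :: "nat set \<Rightarrow> nat set \<Rightarrow> nat set" where
  "Dmulti S X = (\<Union>x\<in>X. Dset S x)"

end

theory Submission
  imports Defs
begin

text \<open>
  Passing from \<open>D(m,\<dots>,m+j-1)\<close> to \<open>D(m,\<dots>,m+j)\<close>, the new divisors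
  are \<open>m+j\<close> itself and the numbers \<open>m - y\<close> where \<open>y,\<dots>,y+j-1\<close> are gaps of \<open>S\<close> and \<open>y+j \<in> S\<close>;
  the hypothesis \<open>m \<ge> 2c-1\<close> makes every such \<open>m - y\<close> lie above the conductor. This holds in
  any numerical semigroup. For \<open>S = \<langle>a,\<dots>,a+b\<rangle>\<close> the elements are exactly the numbers in
  \<open>[ka, k(a+b)]\<close>, so the gaps form the intervals \<open>(k(a+b), (k+1)a)\<close> and such a \<open>y\<close> is
  \<open>(k+1)a - j\<close> with \<open>kb + j < a\<close>. Counting the admissible \<open>k\<close> gives
  \<open>\<lceil>(a+b-j)/b\<rceil> - 1\<close> new divisors besides \<open>m+j\<close>.
\<close>

definition gap_block_starts :: "nat set \<Rightarrow> nat \<Rightarrow> nat set" where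
  "gap_block_starts S j = {y. (\<forall>i<j. y + i \<notin> S) \<and> y + j \<in> S}"

lemma finite_Dset: "finite (Dset S x)"
  by (rule finite_subset[of _ "{..x}"]) (auto simp: Dset_def)

lemma finite_Dmulti: "finite X \<Longrightarrow> finite (Dmulti S X)"
  by (simp add: Dmulti_def finite_Dset)

lemma mem_of_conductor_le:
  assumes "\<And>x. c\<^sub>0 \<le> x \<Longrightarrow> x \<in> S" and "conductor S \<le> x"
  shows "x \<in> S"
proof -
  have "\<exists>c. c \<in> S \<and> (\<forall>n. c + n \<in> S)"
    using assms(1) by (intro exI[of _ c\<^sub>0]) auto
  then have "\<forall>n. conductor S + n \<in> S"
    unfolding conductor_def by (rule LeastI2_ex) blast
  then show ?thesis
    using assms(2) le_Suc_ex by blast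
qed

context
  fixes S :: "nat set" and c m :: nat
  assumes zero_mem: "0 \<in> S"
    and mem_above: "\<And>x. c \<le> x \<Longrightarrow> x \<in> S"
    and m_large: "2 * c \<le> m + 1"
begin

lemma gap_block_start_less:
  assumes "1 \<le> j" and "y \<in> gap_block_starts S j"
  shows "y < c"
proof -
  have "y \<notin> S"
    using assms by (auto simp: gap_block_starts_def)
  then show ?thesis
    using mem_above not_le by blast
qed

lemma Dset_diff_Dmulti:
  assumes "1 \<le> j"
  shows "Dset S (m + j) - Dmulti S {m..<m + j}
           = insert (m + j) ((\<lambda>y. m - y) ` gap_block_starts S j)"
proof (intro set_eqI iffI)
  fix \<alpha> assume "\<alpha> \<in> Dset S (m + j) - Dmulti S {m..<m + j}"
  then have \<alpha>: "\<alpha> \<in> S" "\<alpha> \<le> m + j" "m + j - \<alpha> \<in> S"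
    and fresh: "\<And>x. m \<le> x \<Longrightarrow> x < m + j \<Longrightarrow> \<alpha> \<le> x \<Longrightarrow> x - \<alpha> \<notin> S"
    by (auto simp: Dset_def Dmulti_def)
  show "\<alpha> \<in> insert (m + j) ((\<lambda>y. m - y) ` gap_block_starts S j)"
  proof (cases "m \<le> \<alpha>")
    case True
    with fresh[of \<alpha>] zero_mem \<alpha>(2) have "\<alpha> = m + j"
      by fastforce
    then show ?thesis by simp
  next
    case False
    have "m - \<alpha> \<in> gap_block_starts S j"
      unfolding gap_block_starts_def
    proof (intro CollectI conjI allI impI)
      fix i assume "i < j"
      then show "m - \<alpha> + i \<notin> S"
        using fresh[of "m + i"] False by (simp add: add.commute)
    next
      show "m - \<alpha> + j \<in> S"
        using \<alpha>(3) False by (simp add: add.commute)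
    qed
    moreover have "\<alpha> = m - (m - \<alpha>)"
      using False by simp
    ultimately show ?thesis by blast
  qed
next
  fix \<alpha> assume "\<alpha> \<in> insert (m + j) ((\<lambda>y. m - y) ` gap_block_starts S j)"
  then consider "\<alpha> = m + j" | y where "y \<in> gap_block_starts S j" "\<alpha> = m - y"
    by blast
  then show "\<alpha> \<in> Dset S (m + j) - Dmulti S {m..<m + j}"
  proof cases
    case 1
    have "\<alpha> \<in> S"
      using 1 m_large by (intro mem_above) linarith
    then show ?thesis
      using 1 zero_mem by (auto simp: Dset_def Dmulti_def)
  next
    case (2 y)
    have "y < c"
      using gap_block_start_less[OF assms 2(1)] .
    then have "c \<le> \<alpha>" "y \<le> m"
      using 2(2) m_large by linarith+
    have shift: "x - \<alpha> = y + (x - m)" if "m \<le> x" for x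
      using that 2(2) \<open>y \<le> m\<close> by simp
    have "\<alpha> \<in> S" "m + j - \<alpha> \<in> S"
      using mem_above[OF \<open>c \<le> \<alpha>\<close>] 2(1) shift[of "m + j"]
      by (auto simp: gap_block_starts_def)
    moreover have "x - \<alpha> \<notin> S" if "m \<le> x" "x < m + j" for x
    proof -
      have "x - m < j"
        using that by linarith
      then show ?thesis
        using 2(1) shift[OF that(1)] by (simp add: gap_block_starts_def)
    qed
    ultimately show ?thesis
      using 2(2) by (auto simp: Dset_def Dmulti_def)
  qed
qed

lemma card_Dset_diff_Dmulti:
  assumes "1 \<le> j"
  shows "card (Dset S (m + j) - Dmulti S {m..<m + j}) = Suc (card (gap_block_starts S j))"
proof -
  have small: "gap_block_starts S j \<subseteq> {..<c}"
    using gap_block_start_less[OF assms] by blast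
  then have "c \<le> m \<or> gap_block_starts S j = {}"
    using m_large by fastforce
  then have "inj_on (\<lambda>y. m - y) (gap_block_starts S j)"
    using small by (auto intro!: inj_onI)
  moreover have "finite (gap_block_starts S j)"
    using small finite_subset by blast
  moreover have "m + j \<notin> (\<lambda>y. m - y) ` gap_block_starts S j"
    using assms by auto
  ultimately show ?thesis
    by (simp add: Dset_diff_Dmulti[OF assms] card_image)
qed

lemma card_Dmulti:
  "card (Dmulti S {m..m + t}) = card (Dset S m) + (\<Sum>j=1..t. Suc (card (gap_block_starts S j)))"
proof (induction t)
  case 0
  then show ?case by (simp add: Dmulti_def)
next
  case (Suc t)
  have "{m..m + Suc t} = insert (m + Suc t) {m..<m + Suc t}"
    by auto
  then have "Dmulti S {m..m + Suc t}
      = Dmulti S {m..<m + Suc t} \<union> (Dset S (m + Suc t) - Dmulti S {m..<m + Suc t})"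
    by (auto simp: Dmulti_def)
  also have "card \<dots> = card (Dmulti S {m..<m + Suc t}) + Suc (card (gap_block_starts S (Suc t)))"
    by (subst card_Un_disjoint)
      (simp_all add: finite_Dmulti finite_Dset card_Dset_diff_Dmulti del: add_Suc_right)
  finally have "card (Dmulti S {m..m + Suc t})
      = card (Dmulti S {m..m + t}) + Suc (card (gap_block_starts S (Suc t)))"
    by (simp add: atLeastLessThanSuc_atLeastAtMost)
  then show ?case
    using Suc.IH by simp
qed

end

lemma mem_gen_semigroup_interval_iff:
  "x \<in> gen_semigroup {a..a+b} \<longleftrightarrow> (\<exists>k. k * a \<le> x \<and> x \<le> k * (a + b))"
proof
  show "\<exists>k. k * a \<le> x \<and> x \<le> k * (a + b)" if "x \<in> gen_semigroup {a..a+b}"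
    using that
  proof (induction rule: gen_semigroup.induct)
    case zero
    show ?case by auto
  next
    case (add x g)
    then obtain k where "k * a \<le> x" "x \<le> k * (a + b)" by blast
    with add.hyps(2) show ?case
      by (intro exI[of _ "Suc k"]) auto
  qed
next
  show "x \<in> gen_semigroup {a..a+b}" if "\<exists>k. k * a \<le> x \<and> x \<le> k * (a + b)"
  proof -
    from that obtain k where "k * a \<le> x" "x \<le> k * (a + b)" by blast
    then show ?thesis
    proof (induction k arbitrary: x)
      case 0
      then show ?case by (simp add: gen_semigroup.zero)
    next
      case (Suc k)
      \<comment> \<open>peel off the largest admissible generator\<close>
      define g where "g = min (a + b) (x - k * a)"
      have "g \<in> {a..a+b}" "k * a \<le> x - g" "x - g \<le> k * (a + b)"
        using Suc.prems by (auto simp: g_def min_def)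
      then have "x - g + g \<in> gen_semigroup {a..a+b}"
        using Suc.IH gen_semigroup.add by blast
      moreover have "x - g + g = x"
        using Suc.prems by (auto simp: g_def min_def)
      ultimately show ?case by simp
    qed
  qed
qed

lemma not_mem_gen_semigroup_interval:
  assumes "k * (a + b) < z" and "z < (k + 1) * a"
  shows "z \<notin> gen_semigroup {a..a+b}"
proof
  assume "z \<in> gen_semigroup {a..a+b}"
  then obtain K where K: "K * a \<le> z" "z \<le> K * (a + b)"
    by (auto simp: mem_gen_semigroup_interval_iff)
  then have "K * a < (k + 1) * a"
    using assms(2) by linarith
  then have "K \<le> k"
    by (metis less_Suc_eq_le mult_less_cancel2 Suc_eq_plus1)
  then show False
    using K(2) assms(1) mult_le_mono1[of K k "a + b"] by linarith
qed

lemma gen_semigroup_interval_gap_bound: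
  assumes "0 < a" and "z \<notin> gen_semigroup {a..a+b}"
  shows "(z div a) * (a + b) < z" and "z < (z div a + 1) * a"
proof -
  show "z < (z div a + 1) * a"
    using assms(1) by (simp add: dividend_less_div_times)
  show "(z div a) * (a + b) < z"
    using assms(2) by (metis div_times_less_eq_dividend mult.commute
        mem_gen_semigroup_interval_iff not_le)
qed

lemma gen_semigroup_interval_cofinite:
  assumes "0 < a" and "0 < b" and "a * a \<le> x"
  shows "x \<in> gen_semigroup {a..a+b}"
proof (rule ccontr)
  assume "x \<notin> gen_semigroup {a..a+b}"
  from gen_semigroup_interval_gap_bound[OF assms(1) this]
  have "(x div a) * b < a"
    by (simp add: algebra_simps)
  moreover have "a * a div a \<le> x div a"
    using assms(3) by (rule div_le_mono)
  moreover have "x div a \<le> (x div a) * b"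
    using assms(2) by simp
  ultimately show False
    using assms(1) by simp
qed

lemma gap_block_starts_gen_semigroup_interval:
  assumes "0 < a" and "1 \<le> j"
  shows "gap_block_starts (gen_semigroup {a..a+b}) j
           = (\<lambda>k. (k + 1) * a - j) ` {k. k * b + j < a}"
proof (intro set_eqI iffI)
  fix y assume y: "y \<in> gap_block_starts (gen_semigroup {a..a+b}) j"
  define k where "k = y div a"
  have "y \<notin> gen_semigroup {a..a+b}"
    using y assms(2) by (auto simp: gap_block_starts_def)
  from gen_semigroup_interval_gap_bound[OF assms(1) this]
  have k: "k * (a + b) < y" "y < (k + 1) * a"
    by (simp_all add: k_def)
  have next_mem: "(k + 1) * a \<in> gen_semigroup {a..a+b}"
    unfolding mem_gen_semigroup_interval_iff by (intro exI[of _ "k + 1"]) (simp add: algebra_simps)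
  have block: "y + i \<notin> gen_semigroup {a..a+b}" if "i < j" for i
    using y that by (simp add: gap_block_starts_def)
  have end_mem: "y + j \<in> gen_semigroup {a..a+b}"
    using y by (simp add: gap_block_starts_def)
  have "\<not> (k + 1) * a < y + j"
  proof
    assume "(k + 1) * a < y + j"
    then have "(k + 1) * a - y < j" and "y + ((k + 1) * a - y) = (k + 1) * a"
      using k(2) by linarith+
    with block next_mem show False by metis
  qed
  moreover have "\<not> y + j < (k + 1) * a"
  proof
    assume "y + j < (k + 1) * a"
    with k(1) have "y + j \<notin> gen_semigroup {a..a+b}"
      by (intro not_mem_gen_semigroup_interval) simp_all
    with end_mem show False by contradiction
  qed
  ultimately have "y + j = (k + 1) * a"
    by linarith
  moreover have "k * b + j < a"
    using k(1) calculation by (simp add: algebra_simps)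
  ultimately show "y \<in> (\<lambda>k. (k + 1) * a - j) ` {k. k * b + j < a}"
    by (intro image_eqI[of _ _ k]) auto
next
  fix y assume "y \<in> (\<lambda>k. (k + 1) * a - j) ` {k. k * b + j < a}"
  then obtain k where k: "k * b + j < a" "y = (k + 1) * a - j"
    by blast
  have "y + i \<notin> gen_semigroup {a..a+b}" if "i < j" for i
    using k that by (intro not_mem_gen_semigroup_interval[of k]) (auto simp: algebra_simps)
  moreover have "y + j \<in> gen_semigroup {a..a+b}"
    unfolding mem_gen_semigroup_interval_iff using k
    by (intro exI[of _ "k + 1"]) (simp add: algebra_simps)
  ultimately show "y \<in> gap_block_starts (gen_semigroup {a..a+b}) j"
    by (simp add: gap_block_starts_def)
qed

lemma card_mult_less:
  assumes "0 < b"
  shows "card {k::nat. k * b < n} = nat \<lceil>real n / real b\<rceil>"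
proof -
  have "k * b < n \<longleftrightarrow> k < nat \<lceil>real n / real b\<rceil>" for k
  proof -
    have "k * b < n \<longleftrightarrow> real k < real n / real b"
      using assms by (simp add: pos_less_divide_eq flip: of_nat_mult)
    also have "\<dots> \<longleftrightarrow> int k < \<lceil>real n / real b\<rceil>"
      by (simp add: less_ceiling_iff)
    finally show ?thesis by linarith
  qed
  then have "{k. k * b < n} = {..<nat \<lceil>real n / real b\<rceil>}"
    by auto
  then show ?thesis by simp
qed

lemma card_gap_block_starts_gen_semigroup_interval:
  assumes "0 < a" and "0 < b" and "1 \<le> j" and "j < a + b"
  shows "Suc (card (gap_block_starts (gen_semigroup {a..a+b}) j))
           = nat \<lceil>real (a + b - j) / real b\<rceil>"
proof -
  have "k < a" if "k * b + j < a" for k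
  proof -
    have "k \<le> k * b"
      using assms(2) by simp
    with that show ?thesis by linarith
  qed
  then have fin: "finite {k. k * b + j < a}"
    by (auto intro: finite_subset[of _ "{..<a}"])
  have "inj_on (\<lambda>k. (k + 1) * a - j) {k. k * b + j < a}"
  proof (rule inj_onI)
    fix k l assume "k \<in> {k. k * b + j < a}" "l \<in> {k. k * b + j < a}"
      and eq: "(k + 1) * a - j = (l + 1) * a - j"
    then have "j \<le> (k + 1) * a" "j \<le> (l + 1) * a"
      by (simp_all add: trans_le_add1)
    with eq have "(k + 1) * a = (l + 1) * a"
      by linarith
    then show "k = l"
      using assms(1) by simp
  qed
  then have "card (gap_block_starts (gen_semigroup {a..a+b}) j) = card {k. k * b + j < a}"
    by (simp add: gap_block_starts_gen_semigroup_interval[OF assms(1,3)] card_image)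
  also have "Suc \<dots> = card (insert 0 (Suc ` {k. k * b + j < a}))"
    using fin by (simp add: card_image)
  also have "insert 0 (Suc ` {k. k * b + j < a}) = {k. k * b < a + b - j}"
  proof (intro set_eqI iffI)
    fix k assume "k \<in> {k. k * b < a + b - j}"
    then show "k \<in> insert 0 (Suc ` {k. k * b + j < a})"
      using assms(4) by (cases k) auto
  qed (use assms(4) in auto)
  finally show ?thesis
    by (simp add: card_mult_less[OF assms(2)])
qed

theorem corollary4p7:
  fixes a b m t :: nat
  assumes "0 < b" and "b < a"
    and "m \<ge> 2 * conductor (gen_semigroup {a..a+b}) - 1"
    and "1 \<le> t" and "t \<le> a + b - 1"
  shows "card (Dmulti (gen_semigroup {a..a+b}) {m..m+t})
         = card (Dset (gen_semigroup {a..a+b}) m)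
           + (\<Sum>j=1..t. nat (ceiling (real (a + b - j) / real b)))"
proof -
  let ?S = "gen_semigroup {a..a+b}"
  have "0 < a"
    using assms(2) by simp
  then have above: "x \<in> ?S" if "conductor ?S \<le> x" for x
    using mem_of_conductor_le[of "a * a" ?S x] gen_semigroup_interval_cofinite[of a b] assms(1) that
    by blast
  have "2 * conductor ?S \<le> m + 1"
    using assms(3) by linarith
  from card_Dmulti[OF gen_semigroup.zero above this]
  have "card (Dmulti ?S {m..m+t})
      = card (Dset ?S m) + (\<Sum>j=1..t. Suc (card (gap_block_starts ?S j)))" .
  also have "(\<Sum>j=1..t. Suc (card (gap_block_starts ?S j)))
      = (\<Sum>j=1..t. nat \<lceil>real (a + b - j) / real b\<rceil>)"
    using assms(1,2,5) by (intro sum.cong refl card_gap_block_starts_gen_semigroup_interval) auto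
  finally show ?thesis .
qed

end
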